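(* Fix $a\ge0$ and $0\le\alpha\le\beta$, and let $\rho(x)=1+x^2$. Then for every $f\in C_\rho^k[0,\infty)$, $$\lim_{n\to\infty}\left\|T_{n,a}^{\alpha,\beta}(f;\cdot)-f\right\|_\rho=\lim_{n\to\infty}\sup_{x\ge0}\frac{|T_{n,a}^{\alpha,\beta}(f;x)-f(x)|}{1+x^2}=0.$$
   Context: Fix $a\ge 0$ and real numbers $\alpha,\beta$ with $0\le\alpha\le\beta$. For $n\in\mathbb N=\{1,2,\dots\}$ let $(n)_0=1$, $(n)_i=n(n+1)\cdots(n+i-1)$, and $p_k(n,a)=\sum_{i=0}^{k}\binom{k}{i}(n)_i a^{k-i}$. For $x\ge0$ and $k=0,1,2,\dots$ put $W_{n,k}^a(x)=e^{-\frac{ax}{1+x}}\frac{p_k(n,a)}{k!}\frac{x^k}{(1+x)^{k+n}}$ (so that $\sum_{k\ge0}W_{n,k}^a(x)=1$). The generalized Baskakov–Kantorovich–Stancu operator is $T_{n,a}^{\alpha,\beta}(f;x)=(n+\beta)\sum_{k=0}^{\infty}W_{n,k}^a(x)\int_{\frac{k+\alpha}{n+\beta}}^{\frac{k+\alpha+1}{n+\beta}}f(t)\,dt$. With the weight $\rho(x)=1+x^2$: $B_\rho[0,\infty)$ is the set of functions $f$ on $[0,\infty)$ with $|f(x)|\le M_f\rho(x)$ for all $x\ge0$ and some constant $M_f$; $C_\rho[0,\infty)$ is the set of continuous functions in $B_\rho[0,\infty)$, normed by $\|f\|_\rho=\sup_{x\ge0}|f(x)|/\rho(x)$; and $C_\rho^k[0,\infty)$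 is the set of $f\in C_\rho[0,\infty)$ for which $\lim_{x\to\infty}f(x)/\rho(x)$ exists and is finite. *)

theory Defs
  imports "HOL-Analysis.Analysis"
begin

definition p_poly :: "nat \<Rightarrow> nat \<Rightarrow> real \<Rightarrow> real" where
  "p_poly k n a = (\<Sum>i=0..k. real (k choose i) * pochhammer (real n) i * a ^ (k - i))"

definition W_basis :: "nat \<Rightarrow> nat \<Rightarrow> real \<Rightarrow> real \<Rightarrow> real" where
  "W_basis n k a x = exp (- (a * x / (1 + x))) * (p_poly k n a / fact k)
      * (x ^ k / (1 + x) ^ (k + n))"

definition T_op :: "nat \<Rightarrow> real \<Rightarrow> real \<Rightarrow> real \<Rightarrow> (real \<Rightarrow> real) \<Rightarrow> real \<Rightarrow> real" where
  "T_op n a \<alpha> \<beta> f x = (real n + \<beta>) *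
     (\<Sum>k. W_basis n k a x *
        integral {(real k + \<alpha>) / (real n + \<beta>) .. (real k + \<alpha> + 1) / (real n + \<beta>)} f)"

definition rho :: "real \<Rightarrow> real" where
  "rho x = 1 + x\<^sup>2"

definition B_rho :: "(real \<Rightarrow> real) set" where
  "B_rho = {f. \<exists>M. \<forall>x\<ge>0. \<bar>f x\<bar> \<le> M * rho x}"

definition C_rho :: "(real \<Rightarrow> real) set" where
  "C_rho = {f. f \<in> B_rho \<and> continuous_on {0..} f}"

definition C_rho_k :: "(real \<Rightarrow> real) set" where
  "C_rho_k = {f. f \<in> C_rho \<and> (\<exists>L. ((\<lambda>x. f x / rho x) \<longlongrightarrow> L) at_top)}"

definition rho_norm :: "(real \<Rightarrow> real) \<Rightarrow> real" where
  "rho_norm g = (SUP x\<in>{0..}. \<bar>g x\<bar> / rho x)"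

end

theory Submission
  imports Defs
begin

text \<open>With \<open>u = x / (1 + x)\<close>, the weight \<open>W_basis n k a x\<close> is \<open>(1 - u)^n e^{-au}\<close> times the
  \<open>k\<close>-th coefficient of the Cauchy product of the negative binomial series of \<open>(1 - u)^{-n}\<close> and
  the exponential series of \<open>e^{au}\<close>. This makes the first three moments of the weights explicit,
  so the operator reproduces \<open>1, t, t^2\<close> up to errors \<open>O(\<rho>(x) / n)\<close>. Writing
  \<open>f = L \<rho> + h\<close> with \<open>h = o(\<rho>)\<close>, uniform continuity on a compact interval together with the
  growth of \<open>h\<close> at infinity gives \<open>|h t - h x| \<le> 3 \<epsilon> \<rho>(x) + C (t - x)^2\<close>; positivity of the
  operator turns this into \<open>|T f x - f x| \<le> (3 \<epsilon> + C' / n) \<rho>(x)\<close>.\<close>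

section \<open>Moments of the negative binomial and exponential series\<close>

definition negbin_term :: "real \<Rightarrow> real \<Rightarrow> nat \<Rightarrow> real" where
  "negbin_term c u i = pochhammer c i * u ^ i / fact i"

definition exp_term :: "real \<Rightarrow> nat \<Rightarrow> real" where
  "exp_term y j = y ^ j / fact j"

lemma of_nat_Suc_mult_div_fact_Suc: "real (Suc m) * (X / fact (Suc m)) = X / fact m"
proof -
  have "fact (Suc m) = real (Suc m) * fact m" by (simp add: fact_Suc)
  then show ?thesis by simp
qed

lemma sums_first_moment_shift:
  fixes X Y :: "nat \<Rightarrow> real"
  assumes "\<And>m. real (Suc m) * X (Suc m) = Y m" and "Y sums s"
  shows "(\<lambda>i. real i * X i) sums s"
proof -
  have "(\<lambda>m. real (Suc m) * X (Suc m)) sums s" using assms by simp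
  then show ?thesis by (subst (asm) sums_Suc_iff) simp
qed

lemma sums_second_moment_shift:
  fixes X Y :: "nat \<Rightarrow> real"
  assumes shift: "\<And>m. real (Suc m) * X (Suc m) = Y m"
    and "Y sums s0" and "(\<lambda>i. real i * Y i) sums s1"
  shows "(\<lambda>i. (real i)^2 * X i) sums (s1 + s0)"
proof -
  have "(real (Suc m))^2 * X (Suc m) = real m * Y m + Y m" for m
  proof -
    have "(real (Suc m))^2 * X (Suc m) = real (Suc m) * (real (Suc m) * X (Suc m))"
      by (simp add: power2_eq_square)
    also have "\<dots> = real (Suc m) * Y m" by (simp only: shift)
    finally show ?thesis by (simp add: algebra_simps)
  qed
  then have "(\<lambda>m. (real (Suc m))^2 * X (Suc m)) sums (s1 + s0)"
    using assms(2,3) by (simp add: sums_add)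
  then show ?thesis by (subst (asm) sums_Suc_iff) simp
qed

lemma negbin_term_shift:
  "real (Suc m) * negbin_term c u (Suc m) = c * u * negbin_term (c + 1) u m"
  unfolding negbin_term_def of_nat_Suc_mult_div_fact_Suc pochhammer_rec by (simp add: field_simps)

lemma exp_term_shift: "real (Suc m) * exp_term y (Suc m) = y * exp_term y m"
  unfolding exp_term_def of_nat_Suc_mult_div_fact_Suc by simp

lemma negbin_term_sums:
  assumes "0 \<le> u" "u < 1"
  shows "negbin_term c u sums ((1 - u) powr (- c))"
proof -
  have "(\<lambda>i. (-c gchoose i) * (-u)^i) = negbin_term c u"
  proof
    fix i
    have "(-1::real)^i * (-1)^i = 1"
      by (simp flip: power_mult_distrib)
    then show "(-c gchoose i) * (-u)^i = negbin_term c u i"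
      unfolding negbin_term_def gbinomial_pochhammer power_minus[of u]
      by (simp add: field_simps)
  qed
  then show ?thesis
    using gen_binomial_real[of "-u" "-c"] assms by simp
qed

lemma negbin_term_moments:
  assumes "0 \<le> u" "u < 1"
  shows "(\<lambda>i. real i * negbin_term c u i) sums (c * u * (1 - u) powr (- (c + 1)))"
    and "(\<lambda>i. (real i)^2 * negbin_term c u i) sums
           (c * u * ((c + 1) * u * (1 - u) powr (- (c + 2)) + (1 - u) powr (- (c + 1))))"
proof -
  have s0: "negbin_term (c + 1) u sums ((1 - u) powr (- (c + 1)))" for c
    using negbin_term_sums[OF assms] .
  have s1: "(\<lambda>i. real i * negbin_term c u i) sums (c * u * (1 - u) powr (- (c + 1)))" for c
    by (rule sums_first_moment_shift[OF negbin_term_shift]) (intro sums_mult s0)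
  show "(\<lambda>i. real i * negbin_term c u i) sums (c * u * (1 - u) powr (- (c + 1)))"
    by (rule s1)
  have "(\<lambda>i. real i * (c * u * negbin_term (c + 1) u i)) sums
          (c * u * ((c + 1) * u * (1 - u) powr (- (c + 2))))"
    using sums_mult[OF s1[of "c + 1"], of "c * u"] by (simp add: mult_ac add.assoc)
  from sums_second_moment_shift[OF negbin_term_shift sums_mult[OF s0] this]
  show "(\<lambda>i. (real i)^2 * negbin_term c u i) sums
          (c * u * ((c + 1) * u * (1 - u) powr (- (c + 2)) + (1 - u) powr (- (c + 1))))"
    by (simp add: algebra_simps)
qed

lemma exp_term_sums: "exp_term y sums exp y"
proof -
  have "exp_term y = (\<lambda>n. y ^ n /\<^sub>R fact n)"
    by (auto simp: exp_term_def divide_inverse mult.commute)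
  then show ?thesis using exp_converges[of y] by simp
qed

lemma exp_term_moments:
  shows "(\<lambda>j. real j * exp_term y j) sums (y * exp y)"
    and "(\<lambda>j. (real j)^2 * exp_term y j) sums ((y^2 + y) * exp y)"
proof -
  show s1: "(\<lambda>j. real j * exp_term y j) sums (y * exp y)"
    by (rule sums_first_moment_shift[OF exp_term_shift]) (intro sums_mult exp_term_sums)
  have "(\<lambda>j. real j * (y * exp_term y j)) sums (y * (y * exp y))"
    using sums_mult[OF s1, of y] by (simp add: mult_ac)
  from sums_second_moment_shift[OF exp_term_shift sums_mult[OF exp_term_sums] this]
  show "(\<lambda>j. (real j)^2 * exp_term y j) sums ((y^2 + y) * exp y)"
    by (simp add: algebra_simps power2_eq_square)
qed

lemma Cauchy_product_moments:
  fixes A B :: "nat \<Rightarrow> real"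
  assumes A0: "\<And>i. A i \<ge> 0" and B0: "\<And>j. B j \<ge> 0"
    and sA: "A sums a0" and sA1: "(\<lambda>i. real i * A i) sums a1"
    and sA2: "(\<lambda>i. (real i)^2 * A i) sums a2"
    and sB: "B sums b0" and sB1: "(\<lambda>j. real j * B j) sums b1"
    and sB2: "(\<lambda>j. (real j)^2 * B j) sums b2"
  shows "(\<lambda>k. \<Sum>i\<le>k. A i * B (k - i)) sums (a0 * b0)"
    and "(\<lambda>k. real k * (\<Sum>i\<le>k. A i * B (k - i))) sums (a1 * b0 + a0 * b1)"
    and "(\<lambda>k. (real k)^2 * (\<Sum>i\<le>k. A i * B (k - i))) sums (a2 * b0 + 2 * (a1 * b1) + a0 * b2)"
proof -
  have prod: "(\<lambda>k. \<Sum>i\<le>k. F i * G (k - i)) sums (f * g)"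
    if "\<And>i. F i \<ge> 0" "\<And>j. G j \<ge> 0" "F sums f" "G sums g" for F G :: "nat \<Rightarrow> real" and f g
  proof -
    have "summable (\<lambda>k. norm (F k))" "summable (\<lambda>k. norm (G k))"
      using that by (simp_all add: sums_summable)
    from Cauchy_product_sums[OF this] show ?thesis
      using that by (simp add: sums_iff)
  qed
  have A1: "real i * A i \<ge> 0" and A2: "(real i)^2 * A i \<ge> 0"
    and B1: "real i * B i \<ge> 0" and B2: "(real i)^2 * B i \<ge> 0" for i
    using A0 B0 by auto
  show "(\<lambda>k. \<Sum>i\<le>k. A i * B (k - i)) sums (a0 * b0)"
    by (rule prod[OF A0 B0 sA sB])
  have "real k * (\<Sum>i\<le>k. A i * B (k - i)) =
     (\<Sum>i\<le>k. (real i * A i) * B (k - i)) + (\<Sum>i\<le>k. A i * (real (k - i) * B (k - i)))" for k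
    unfolding sum_distrib_left sum.distrib[symmetric]
    by (rule sum.cong) (auto simp: of_nat_diff algebra_simps)
  then show "(\<lambda>k. real k * (\<Sum>i\<le>k. A i * B (k - i))) sums (a1 * b0 + a0 * b1)"
    by (simp only:) (intro sums_add prod A0 B0 A1 B1 sA sA1 sB sB1)
  have "(real k)^2 * (\<Sum>i\<le>k. A i * B (k - i)) =
     (\<Sum>i\<le>k. ((real i)^2 * A i) * B (k - i))
     + 2 * (\<Sum>i\<le>k. (real i * A i) * (real (k - i) * B (k - i)))
     + (\<Sum>i\<le>k. A i * ((real (k - i))^2 * B (k - i)))" for k
    unfolding sum_distrib_left sum.distrib[symmetric]
    by (rule sum.cong) (auto simp: of_nat_diff algebra_simps power2_eq_square)
  then show "(\<lambda>k. (real k)^2 * (\<Sum>i\<le>k. A i * B (k - i))) sums (a2 * b0 + 2 * (a1 * b1) + a0 * b2)"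
    by (simp only:) (intro sums_add sums_mult prod A0 B0 A1 B1 A2 B2 sA sA1 sA2 sB sB1 sB2)
qed

lemma W_basis_eq_Cauchy_product:
  fixes x a :: real
  assumes "x \<ge> 0"
  defines "u \<equiv> x / (1 + x)"
  shows "W_basis n k a x = exp (- (a * u)) * (1 - u) ^ n *
           (\<Sum>i\<le>k. negbin_term (real n) u i * exp_term (a * u) (k - i))"
proof -
  have x1: "1 + x > 0" using assms by simp
  have "1 - u = 1 / (1 + x)" unfolding u_def using x1 by (simp add: field_simps)
  then have xk: "x ^ k / (1 + x) ^ (k + n) = u ^ k * (1 - u) ^ n"
    unfolding u_def by (simp add: power_divide power_add)
  have summand: "real (k choose i) * pochhammer (real n) i * a ^ (k - i) / fact k * u ^ k
      = negbin_term (real n) u i * exp_term (a * u) (k - i)" if "i \<le> k" for i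
  proof -
    have "u ^ k = u ^ i * u ^ (k - i)" using that by (simp flip: power_add)
    moreover have "real (k choose i) / fact k = 1 / (fact i * fact (k - i))"
      using binomial_fact[OF that, where 'a=real] by (simp add: field_simps)
    ultimately show ?thesis
      using that unfolding negbin_term_def exp_term_def by (simp add: field_simps power_mult_distrib)
  qed
  have "p_poly k n a / fact k * u ^ k =
        (\<Sum>i\<le>k. real (k choose i) * pochhammer (real n) i * a ^ (k - i) / fact k * u ^ k)"
    unfolding p_poly_def by (simp add: atLeast0AtMost sum_divide_distrib sum_distrib_right)
  also have "\<dots> = (\<Sum>i\<le>k. negbin_term (real n) u i * exp_term (a * u) (k - i))"
    using summand by simp
  finally have "p_poly k n a / fact k * u ^ k =
                (\<Sum>i\<le>k. negbin_term (real n) u i * exp_term (a * u) (k - i))" .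
  moreover have "W_basis n k a x = exp (- (a * u)) * (1 - u) ^ n * (p_poly k n a / fact k * u ^ k)"
    unfolding W_basis_def xk by (simp add: u_def mult_ac)
  ultimately show ?thesis by simp
qed

definition W_mean :: "nat \<Rightarrow> real \<Rightarrow> real \<Rightarrow> real" where
  "W_mean n a x = real n * x + a * (x / (1 + x))"

definition W_moment2 :: "nat \<Rightarrow> real \<Rightarrow> real \<Rightarrow> real" where
  "W_moment2 n a x = (W_mean n a x)^2 + real n * x^2 + W_mean n a x"

lemma W_basis_moments:
  fixes x a :: real
  assumes x0: "x \<ge> 0" and a0: "a \<ge> 0"
  shows W_basis_nonneg: "W_basis n k a x \<ge> 0"
    and W_basis_sums: "(\<lambda>k. W_basis n k a x) sums 1"
    and W_basis_mean_sums: "(\<lambda>k. real k * W_basis n k a x) sums W_mean n a x"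
    and W_basis_moment2_sums: "(\<lambda>k. (real k)^2 * W_basis n k a x) sums W_moment2 n a x"
proof -
  define u where "u = x / (1 + x)"
  define v where "v = 1 - u"
  define c where "c = real n"
  define E where "E = exp (a * u)"
  define P where "P = v powr (- c)"
  define Z where "Z = exp (- (a * u)) * v ^ n"
  have u0: "0 \<le> u" "u < 1" using x0 unfolding u_def by (auto simp: field_simps)
  have v0: "v > 0" using u0 unfolding v_def by simp
  have ux: "u / v = x" unfolding v_def u_def using x0 by (simp add: field_simps)
  have P1: "v powr (- (c + 1)) = P / v" and P2: "v powr (- (c + 2)) = P / v^2"
    unfolding P_def using v0 by (simp_all add: powr_diff powr_minus divide_inverse powr_numeral)
  \<comment> \<open>the prefactor of \<open>W_basis\<close> is the reciprocal of the product of the two series\<close>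
  have ZPE: "Z * (P * E) = 1"
    unfolding Z_def P_def E_def c_def using v0 by (simp add: powr_minus powr_realpow exp_minus field_simps)
  have A0: "negbin_term c u i \<ge> 0" for i
    unfolding negbin_term_def c_def using u0 by (simp add: pochhammer_of_nat)
  have B0: "exp_term (a * u) j \<ge> 0" for j
    unfolding exp_term_def using u0 a0 by simp
  have W: "W_basis n k a x = Z * (\<Sum>i\<le>k. negbin_term c u i * exp_term (a * u) (k - i))" for k
    using W_basis_eq_Cauchy_product[OF x0] unfolding Z_def v_def c_def u_def by simp
  note prod = Cauchy_product_moments[OF A0 B0 negbin_term_sums[OF u0] negbin_term_moments[OF u0]
      exp_term_sums exp_term_moments, unfolded v_def[symmetric], unfolded P1 P2 P_def[symmetric] E_def[symmetric]]
  show "W_basis n k a x \<ge> 0" unfolding W Z_def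
    using A0 B0 v0 by (intro mult_nonneg_nonneg sum_nonneg) auto
  show "(\<lambda>k. W_basis n k a x) sums 1"
    using sums_mult[OF prod(1), of Z] ZPE unfolding W by (simp add: mult_ac)
  have "(\<lambda>k. real k * W_basis n k a x) sums (Z * (c * u * (P / v) * E + P * (a * u * E)))"
    using sums_mult[OF prod(2), of Z] unfolding W by (simp add: mult_ac)
  moreover have "Z * (c * u * (P / v) * E + P * (a * u * E)) = (c * (u / v) + a * u) * (Z * (P * E))"
    by (simp add: field_simps)
  ultimately have "(\<lambda>k. real k * W_basis n k a x) sums (c * (u / v) + a * u)"
    using ZPE by simp
  then show "(\<lambda>k. real k * W_basis n k a x) sums W_mean n a x"
    unfolding ux unfolding W_mean_def c_def u_def .
  have "(\<lambda>k. (real k)^2 * W_basis n k a x) sums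
     (Z * (c * u * ((c + 1) * u * (P / v^2) + P / v) * E + 2 * (c * u * (P / v) * (a * u * E))
       + P * (((a * u)^2 + a * u) * E)))"
    using sums_mult[OF prod(3), of Z] unfolding W by (simp add: mult_ac)
  moreover have "Z * (c * u * ((c + 1) * u * (P / v^2) + P / v) * E + 2 * (c * u * (P / v) * (a * u * E))
       + P * (((a * u)^2 + a * u) * E))
     = (c * (c + 1) * (u / v)^2 + c * (u / v) + 2 * c * (u / v) * (a * u) + (a * u)^2 + a * u)
       * (Z * (P * E))"
    using v0 by (simp add: field_simps power2_eq_square)
  ultimately have "(\<lambda>k. (real k)^2 * W_basis n k a x) sums
      (c * (c + 1) * (u / v)^2 + c * (u / v) + 2 * c * (u / v) * (a * u) + (a * u)^2 + a * u)"
    using ZPE by simp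
  then show "(\<lambda>k. (real k)^2 * W_basis n k a x) sums W_moment2 n a x"
    unfolding ux unfolding W_moment2_def W_mean_def c_def u_def
    by (simp add: algebra_simps power2_eq_square)
qed

section \<open>The operator on quadratic functions\<close>

definition T_interval :: "nat \<Rightarrow> real \<Rightarrow> real \<Rightarrow> nat \<Rightarrow> real set" where
  "T_interval n \<alpha> \<beta> k = {(real k + \<alpha>) / (real n + \<beta>) .. (real k + \<alpha> + 1) / (real n + \<beta>)}"

lemma T_op_eq:
  "T_op n a \<alpha> \<beta> f x = (real n + \<beta>) * (\<Sum>k. W_basis n k a x * integral (T_interval n \<alpha> \<beta> k) f)"
  unfolding T_op_def T_interval_def ..

lemma T_interval_subset_nonneg:
  assumes "real n + \<beta> > 0" "\<alpha> \<ge> 0"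
  shows "T_interval n \<alpha> \<beta> k \<subseteq> {0..}"
proof -
  have "0 \<le> (real k + \<alpha>) / (real n + \<beta>)" using assms by simp
  then show ?thesis unfolding T_interval_def by auto
qed

lemma integrable_on_T_interval:
  fixes f :: "real \<Rightarrow> real"
  assumes "continuous_on {0..} f" "real n + \<beta> > 0" "\<alpha> \<ge> 0"
  shows "f integrable_on T_interval n \<alpha> \<beta> k"
proof -
  have "continuous_on (T_interval n \<alpha> \<beta> k) f"
    using continuous_on_subset[OF assms(1) T_interval_subset_nonneg[OF assms(2,3)]] .
  then show ?thesis unfolding T_interval_def by (rule integrable_continuous_real)
qed

lemma integral_quadratic:
  fixes l r c0 c1 c2 :: real
  assumes "l \<le> r"
  shows "integral {l..r} (\<lambda>t. c0 + c1 * t + c2 * t^2)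
           = c0 * (r - l) + c1 * (r^2 - l^2) / 2 + c2 * (r^3 - l^3) / 3"
proof -
  let ?F = "\<lambda>t::real. c0 * t + c1 * t^2 / 2 + c2 * t^3 / 3"
  have "((\<lambda>t. c0 + c1 * t + c2 * t^2) has_integral (?F r - ?F l)) {l..r}"
  proof (rule fundamental_theorem_of_calculus[OF assms])
    fix t
    have "(?F has_real_derivative (c0 + c1 * t + c2 * t^2)) (at t within {l..r})"
      by (auto intro!: derivative_eq_intros simp: power2_eq_square)
    then show "(?F has_vector_derivative (c0 + c1 * t + c2 * t^2)) (at t within {l..r})"
      by (simp add: has_real_derivative_iff_has_vector_derivative)
  qed
  then show ?thesis by (simp add: integral_unique field_simps)
qed

definition T_moment1 :: "nat \<Rightarrow> real \<Rightarrow> real \<Rightarrow> real \<Rightarrow> real \<Rightarrow> real" where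
  "T_moment1 n a \<alpha> \<beta> x = (2 * \<alpha> + 1) / (2 * (real n + \<beta>)) + W_mean n a x / (real n + \<beta>)"

definition T_moment2 :: "nat \<Rightarrow> real \<Rightarrow> real \<Rightarrow> real \<Rightarrow> real \<Rightarrow> real" where
  "T_moment2 n a \<alpha> \<beta> x = (3 * \<alpha>^2 + 3 * \<alpha> + 1) / (3 * (real n + \<beta>)^2)
     + (2 * \<alpha> + 1) * W_mean n a x / (real n + \<beta>)^2 + W_moment2 n a x / (real n + \<beta>)^2"

lemma T_op_quadratic:
  fixes a \<alpha> \<beta> x c0 c1 c2 :: real
  assumes N0: "real n + \<beta> > 0" and a0: "a \<ge> 0" and x0: "x \<ge> 0"
  defines "q \<equiv> \<lambda>t. c0 + c1 * t + c2 * t^2"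
  shows T_op_quadratic_sums: "(\<lambda>k. W_basis n k a x * integral (T_interval n \<alpha> \<beta> k) q) sums
           ((c0 + c1 * T_moment1 n a \<alpha> \<beta> x + c2 * T_moment2 n a \<alpha> \<beta> x) / (real n + \<beta>))"
    and "T_op n a \<alpha> \<beta> q x = c0 + c1 * T_moment1 n a \<alpha> \<beta> x + c2 * T_moment2 n a \<alpha> \<beta> x"
proof -
  define N where "N = real n + \<beta>"
  have N0': "N > 0" using N0 N_def by simp
  define d0 where "d0 = c0 + c1 * (2 * \<alpha> + 1) / (2 * N) + c2 * (3 * \<alpha>^2 + 3 * \<alpha> + 1) / (3 * N^2)"
  define d1 where "d1 = c1 / N + c2 * (2 * \<alpha> + 1) / N^2"
  define d2 where "d2 = c2 / N^2"
  have integral_q: "integral (T_interval n \<alpha> \<beta> k) q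
      = (d0 + d1 * real k + d2 * (real k)^2) / N" for k
  proof -
    have "(real k + \<alpha>) / N \<le> (real k + \<alpha> + 1) / N" using N0' by (simp add: divide_right_mono)
    then have iq: "integral (T_interval n \<alpha> \<beta> k) q
        = c0 * ((real k + \<alpha> + 1) / N - (real k + \<alpha>) / N)
          + c1 * (((real k + \<alpha> + 1) / N)^2 - ((real k + \<alpha>) / N)^2) / 2
          + c2 * (((real k + \<alpha> + 1) / N)^3 - ((real k + \<alpha>) / N)^3) / 3"
      unfolding T_interval_def N_def[symmetric] q_def by (rule integral_quadratic)
    show ?thesis
      unfolding iq d0_def d1_def d2_def using N0' by (simp add: field_simps power2_eq_square power3_eq_cube)
  qed
  have "(\<lambda>k. (d0 * W_basis n k a x + d1 * (real k * W_basis n k a x)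
          + d2 * ((real k)^2 * W_basis n k a x)) / N)
     sums ((d0 * 1 + d1 * W_mean n a x + d2 * W_moment2 n a x) / N)"
    using W_basis_moments[OF x0 a0] by (intro sums_divide sums_add sums_mult)
  moreover have "(d0 * 1 + d1 * W_mean n a x + d2 * W_moment2 n a x) / N
      = (c0 + c1 * T_moment1 n a \<alpha> \<beta> x + c2 * T_moment2 n a \<alpha> \<beta> x) / N"
    unfolding T_moment1_def T_moment2_def d0_def d1_def d2_def N_def[symmetric]
    using N0' by (simp add: field_simps power2_eq_square)
  ultimately show s: "(\<lambda>k. W_basis n k a x * integral (T_interval n \<alpha> \<beta> k) q) sums
           ((c0 + c1 * T_moment1 n a \<alpha> \<beta> x + c2 * T_moment2 n a \<alpha> \<beta> x) / (real n + \<beta>))"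
    unfolding integral_q N_def by (simp add: algebra_simps add_divide_distrib)
  show "T_op n a \<alpha> \<beta> q x = c0 + c1 * T_moment1 n a \<alpha> \<beta> x + c2 * T_moment2 n a \<alpha> \<beta> x"
    unfolding T_op_eq sums_unique[OF s, symmetric] using N0 by simp
qed

lemma T_op_abs_le_quadratic:
  fixes a \<alpha> \<beta> x c0 c1 c2 :: real and \<phi> :: "real \<Rightarrow> real"
  assumes N0: "real n + \<beta> > 0" and al: "\<alpha> \<ge> 0" and a0: "a \<ge> 0" and x0: "x \<ge> 0"
    and cont: "continuous_on {0..} \<phi>"
    and bound: "\<And>t. t \<ge> 0 \<Longrightarrow> \<bar>\<phi> t\<bar> \<le> c0 + c1 * t + c2 * t^2"
  shows "summable (\<lambda>k. W_basis n k a x * integral (T_interval n \<alpha> \<beta> k) \<phi>)"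
    and "\<bar>T_op n a \<alpha> \<beta> \<phi> x\<bar> \<le> c0 + c1 * T_moment1 n a \<alpha> \<beta> x + c2 * T_moment2 n a \<alpha> \<beta> x"
proof -
  define q where "q = (\<lambda>t::real. c0 + c1 * t + c2 * t^2)"
  define f where "f k = W_basis n k a x * integral (T_interval n \<alpha> \<beta> k) \<phi>" for k
  define g where "g k = W_basis n k a x * integral (T_interval n \<alpha> \<beta> k) q" for k
  have "continuous_on {0..} q" unfolding q_def by (intro continuous_intros)
  then have "norm (integral (T_interval n \<alpha> \<beta> k) \<phi>) \<le> integral (T_interval n \<alpha> \<beta> k) q" for k
    using T_interval_subset_nonneg[OF N0 al] bound unfolding q_def
    by (intro integral_norm_bound_integral integrable_on_T_interval cont N0 al) auto
  then have "\<bar>integral (T_interval n \<alpha> \<beta> k) \<phi>\<bar> \<le> integral (T_interval n \<alpha> \<beta> k) q" for k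
    by simp
  then have fg: "\<bar>f k\<bar> \<le> g k" for k
    unfolding f_def g_def using W_basis_nonneg[OF x0 a0]
    by (simp add: abs_mult mult_left_mono)
  have gs: "g sums ((c0 + c1 * T_moment1 n a \<alpha> \<beta> x + c2 * T_moment2 n a \<alpha> \<beta> x) / (real n + \<beta>))"
    unfolding g_def q_def by (rule T_op_quadratic_sums[OF N0 a0 x0])
  then have sg: "summable g" by (rule sums_summable)
  have sf: "summable f" by (rule summable_comparison_test[OF _ sg]) (use fg in auto)
  then show "summable (\<lambda>k. W_basis n k a x * integral (T_interval n \<alpha> \<beta> k) \<phi>)"
    unfolding f_def .
  have "- g k \<le> f k" "f k \<le> g k" for k
    using fg[of k] by linarith+
  then have "suminf f \<le> suminf g" "suminf (\<lambda>k. - g k) \<le> suminf f"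
    using sf sg summable_minus[OF sg] by (simp_all add: suminf_le)
  then have "\<bar>suminf f\<bar> \<le> suminf g"
    by (simp add: suminf_minus[OF sg])
  then have "(real n + \<beta>) * \<bar>suminf f\<bar> \<le> c0 + c1 * T_moment1 n a \<alpha> \<beta> x + c2 * T_moment2 n a \<alpha> \<beta> x"
    using N0 sums_unique[OF gs] mult_left_mono[of "\<bar>suminf f\<bar>" "suminf g" "real n + \<beta>"]
    by (simp add: field_simps)
  then show "\<bar>T_op n a \<alpha> \<beta> \<phi> x\<bar> \<le> c0 + c1 * T_moment1 n a \<alpha> \<beta> x + c2 * T_moment2 n a \<alpha> \<beta> x"
    unfolding T_op_eq f_def[symmetric] using N0 by (simp add: abs_mult)
qed

lemma T_op_add:
  fixes a \<alpha> \<beta> x :: real and \<phi> \<psi> :: "real \<Rightarrow> real"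
  assumes N0: "real n + \<beta> > 0" and al: "\<alpha> \<ge> 0"
    and "continuous_on {0..} \<phi>" and "continuous_on {0..} \<psi>"
    and "summable (\<lambda>k. W_basis n k a x * integral (T_interval n \<alpha> \<beta> k) \<phi>)"
    and "summable (\<lambda>k. W_basis n k a x * integral (T_interval n \<alpha> \<beta> k) \<psi>)"
  shows "T_op n a \<alpha> \<beta> (\<lambda>t. \<phi> t + \<psi> t) x = T_op n a \<alpha> \<beta> \<phi> x + T_op n a \<alpha> \<beta> \<psi> x"
  using assms suminf_add[OF assms(5,6)]
  by (simp add: T_op_eq integral_add integrable_on_T_interval flip: distrib_left)

lemma rho_ge_1: "rho x \<ge> 1"
  unfolding rho_def by simp

lemma rho_pos: "rho x > 0"
  using rho_ge_1[of x] by simp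

lemma le_rho: "x \<le> rho x" "x^2 \<le> rho x"
proof -
  have "0 \<le> (x - 1 / 2)^2" by simp
  then show "x \<le> rho x" unfolding rho_def by (simp add: power2_eq_square algebra_simps)
qed (simp add: rho_def)

lemma rho_le_shift: "rho t \<le> 2 * rho x + 2 * (t - x)^2"
proof -
  have "0 \<le> (t - 2 * x)^2" by simp
  then show ?thesis unfolding rho_def by (simp add: power2_eq_square algebra_simps)
qed

lemma T_moment1_error:
  fixes a \<alpha> \<beta> x :: real
  assumes n1: "n \<ge> 1" and a0: "a \<ge> 0" and al: "0 \<le> \<alpha>" and ab: "\<alpha> \<le> \<beta>" and x0: "x \<ge> 0"
  shows "\<bar>x * (T_moment1 n a \<alpha> \<beta> x - x)\<bar> \<le> (\<alpha> + a + \<beta> + 1) * rho x / real n"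
proof -
  define m where "m = real n"
  define N where "N = m + \<beta>"
  define u where "u = x / (1 + x)"
  have b0: "\<beta> \<ge> 0" using al ab by simp
  have m1: "m \<ge> 1" using n1 unfolding m_def by simp
  have N0: "N > 0" and Nm: "m \<le> N" using m1 b0 unfolding N_def by auto
  have u0: "0 \<le> u" "u \<le> 1" using x0 unfolding u_def by (auto simp: field_simps)
  define E where "E = (2 * \<alpha> + 1) / 2 + a * u - \<beta> * x"
  have "W_mean n a x = m * x + a * u" unfolding W_mean_def m_def u_def ..
  then have "T_moment1 n a \<alpha> \<beta> x - x = ((2 * \<alpha> + 1) / 2 + (m * x + a * u) - N * x) / N"
    unfolding T_moment1_def m_def[symmetric] N_def[symmetric] using N0 by (simp add: field_simps)
  also have "(2 * \<alpha> + 1) / 2 + (m * x + a * u) - N * x = E"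
    unfolding E_def N_def by (simp add: algebra_simps)
  finally have "T_moment1 n a \<alpha> \<beta> x - x = E / N" .
  then have eq: "\<bar>x * (T_moment1 n a \<alpha> \<beta> x - x)\<bar> = \<bar>x * E\<bar> / N"
    using N0 by (simp add: abs_mult)
  have "\<bar>x * E\<bar> \<le> ((2 * \<alpha> + 1) / 2) * x + a * (x * u) + \<beta> * x^2"
    unfolding E_def using al a0 b0 u0 x0
    by (simp add: abs_le_iff algebra_simps power2_eq_square)
  also have "\<dots> \<le> ((2 * \<alpha> + 1) / 2) * rho x + a * rho x + \<beta> * rho x"
    using al a0 b0 u0 x0 le_rho[of x] mult_left_le[of u x]
    by (intro add_mono mult_left_mono) auto
  also have "\<dots> \<le> (\<alpha> + a + \<beta> + 1) * rho x"
    using rho_pos[of x] by (simp add: algebra_simps)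
  finally have "\<bar>x * E\<bar> / N \<le> (\<alpha> + a + \<beta> + 1) * rho x / N"
    using N0 by (simp add: divide_right_mono)
  also have "\<dots> \<le> (\<alpha> + a + \<beta> + 1) * rho x / m"
    using Nm m1 al a0 b0 rho_pos[of x] by (intro divide_left_mono) auto
  finally show ?thesis unfolding eq m_def .
qed

lemma T_moment2_error:
  fixes a \<alpha> \<beta> x :: real
  assumes n1: "n \<ge> 1" and a0: "a \<ge> 0" and al: "0 \<le> \<alpha>" and ab: "\<alpha> \<le> \<beta>" and x0: "x \<ge> 0"
  defines "K \<equiv> (3 * \<alpha>^2 + 3 * \<alpha> + 1) / 3 + (2 * \<alpha> + 1) * (1 + a) + 2 * \<beta> + \<beta>^2 + 3 * a + a^2 + 2"
  shows "\<bar>T_moment2 n a \<alpha> \<beta> x - x^2\<bar> \<le> K * rho x / real n"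
proof -
  define m where "m = real n"
  define N where "N = m + \<beta>"
  define u where "u = x / (1 + x)"
  define w where "w = m * rho x"
  define c where "c = (3 * \<alpha>^2 + 3 * \<alpha> + 1) / 3"
  have b0: "\<beta> \<ge> 0" using al ab by simp
  have m1: "m \<ge> 1" using n1 unfolding m_def by simp
  have N0: "N > 0" and Nm: "m \<le> N" using m1 b0 unfolding N_def by auto
  have u0: "0 \<le> u" "u \<le> 1" using x0 unfolding u_def by (auto simp: field_simps)
  have c0: "c \<ge> 0" unfolding c_def using al by simp
  have w1: "1 \<le> w" using m1 rho_ge_1[of x] unfolding w_def by (metis mult_mono' mult_1 zero_le_one)
  have "rho x \<le> w"
    using mult_right_mono[OF m1 less_imp_le[OF rho_pos]] unfolding w_def by simp
  moreover have "m * x \<le> w" "m * x^2 \<le> w"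
    using le_rho[of x] m1 unfolding w_def by simp_all
  moreover have "m * (x * u) \<le> m * x" "u^2 \<le> 1"
    using m1 x0 u0 mult_left_le[of u x] power_le_one[of u 2] by simp_all
  ultimately have w: "m * x \<le> w" "m * x^2 \<le> w" "x^2 \<le> w" "m * (x * u) \<le> w" "u \<le> w" "u^2 \<le> w"
    using le_rho(2)[of x] u0 w1 by linarith+
  define P where "P = c + (2 * \<alpha> + 1) * (m * x) + ((2 * \<alpha> + 1) * a) * u + (2 * a) * (m * (x * u))
      + a^2 * u^2 + m * x^2 + m * x + a * u"
  define Q where "Q = (2 * \<beta>) * (m * x^2) + \<beta>^2 * x^2"
  have "W_mean n a x = m * x + a * u" unfolding W_mean_def m_def u_def ..
  then have "T_moment2 n a \<alpha> \<beta> x - x^2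
      = (c + (2 * \<alpha> + 1) * (m * x + a * u) + ((m * x + a * u)^2 + m * x^2 + (m * x + a * u))
         - N^2 * x^2) / N^2"
    unfolding T_moment2_def W_moment2_def c_def m_def[symmetric] N_def[symmetric] using N0
    by (simp add: field_simps power2_eq_square)
  also have "c + (2 * \<alpha> + 1) * (m * x + a * u) + ((m * x + a * u)^2 + m * x^2 + (m * x + a * u))
         - N^2 * x^2 = P - Q"
    unfolding P_def Q_def N_def by (simp add: algebra_simps power2_eq_square)
  finally have "T_moment2 n a \<alpha> \<beta> x - x^2 = (P - Q) / N^2" .
  then have eq: "\<bar>T_moment2 n a \<alpha> \<beta> x - x^2\<bar> = \<bar>P - Q\<bar> / N^2"
    by (simp add: abs_divide)
  have "0 \<le> P" "0 \<le> Q" unfolding P_def Q_def using c0 al a0 b0 m1 x0 u0 by auto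
  then have "\<bar>P - Q\<bar> \<le> P + Q" by linarith
  also have "P + Q \<le> (c * w + (2 * \<alpha> + 1) * w + ((2 * \<alpha> + 1) * a) * w + (2 * a) * w
      + a^2 * w + w + w + a * w) + ((2 * \<beta>) * w + \<beta>^2 * w)"
    unfolding P_def Q_def using c0 al a0 b0 w w1 mult_left_mono[OF w1 c0]
    by (intro add_mono mult_left_mono) auto
  also have "\<dots> = K * w"
    unfolding K_def c_def by (simp add: algebra_simps)
  finally have "\<bar>P - Q\<bar> / N^2 \<le> K * w / N^2"
    using N0 by (simp add: divide_right_mono)
  also have "\<dots> \<le> K * w / m^2"
    using Nm m1 al a0 b0 w1 unfolding K_def by (intro divide_left_mono mult_nonneg_nonneg power_mono) auto
  also have "\<dots> = K * rho x / m"
    unfolding w_def using m1 by (simp add: power2_eq_square)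
  finally show ?thesis unfolding eq m_def .
qed

lemma T_moments_error:
  fixes a \<alpha> \<beta> :: real
  assumes "a \<ge> 0" "0 \<le> \<alpha>" "\<alpha> \<le> \<beta>"
  obtains K where "\<And>n x. n \<ge> 1 \<Longrightarrow> x \<ge> 0 \<Longrightarrow> \<bar>x * (T_moment1 n a \<alpha> \<beta> x - x)\<bar> \<le> K * rho x / real n"
    and "\<And>n x. n \<ge> 1 \<Longrightarrow> x \<ge> 0 \<Longrightarrow> \<bar>T_moment2 n a \<alpha> \<beta> x - x^2\<bar> \<le> K * rho x / real n"
proof -
  define K1 where "K1 = \<alpha> + a + \<beta> + 1"
  define K2 where "K2 = (3 * \<alpha>^2 + 3 * \<alpha> + 1) / 3 + (2 * \<alpha> + 1) * (1 + a) + 2 * \<beta> + \<beta>^2 + 3 * a + a^2 + 2"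
  define K where "K = max K1 K2"
  have le_K: "c * rho x / real n \<le> K * rho x / real n" if "c \<le> K" for c x and n :: nat
    using that rho_pos[of x] by (simp add: divide_right_mono)
  have "\<bar>x * (T_moment1 n a \<alpha> \<beta> x - x)\<bar> \<le> K * rho x / real n"
    and "\<bar>T_moment2 n a \<alpha> \<beta> x - x^2\<bar> \<le> K * rho x / real n"
    if "n \<ge> 1" "x \<ge> 0" for n x
    using order_trans[OF T_moment1_error[OF that(1) assms that(2), folded K1_def] le_K]
      order_trans[OF T_moment2_error[OF that(1) assms that(2), folded K2_def] le_K]
    unfolding K_def by simp_all
  then show thesis using that by blast
qed

section \<open>A quadratic modulus of continuity\<close>

lemma uniformly_continuous_on_quadratic_modulus:
  fixes h :: "real \<Rightarrow> real"
  assumes uc: "uniformly_continuous_on S h" and bound: "\<And>y. y \<in> S \<Longrightarrow> \<bar>h y\<bar> \<le> B"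
    and e0: "\<epsilon> > 0"
  obtains C where "C \<ge> 0" "\<And>x t. x \<in> S \<Longrightarrow> t \<in> S \<Longrightarrow> \<bar>h t - h x\<bar> \<le> \<epsilon> + C * (t - x)^2"
proof -
  obtain \<delta> where \<delta>0: "\<delta> > 0"
    and \<delta>: "\<And>x t. x \<in> S \<Longrightarrow> t \<in> S \<Longrightarrow> \<bar>t - x\<bar> < \<delta> \<Longrightarrow> \<bar>h t - h x\<bar> < \<epsilon>"
    using uc e0 unfolding uniformly_continuous_on_def dist_real_def by metis
  define C where "C = 2 * max B 0 / \<delta>^2"
  have "\<bar>h t - h x\<bar> \<le> \<epsilon> + C * (t - x)^2" if "x \<in> S" "t \<in> S" for x t
  proof (cases "\<bar>t - x\<bar> < \<delta>")
    case True
    then show ?thesis using \<delta>[OF that] \<delta>0 unfolding C_def by (simp add: add_increasing2)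
  next
    case False
    then have "\<delta>^2 \<le> \<bar>t - x\<bar>^2" using \<delta>0 by (intro power_mono) auto
    then have "\<delta>^2 \<le> (t - x)^2" by simp
    then have "2 * max B 0 \<le> C * (t - x)^2"
      unfolding C_def using \<delta>0 by (simp add: field_simps mult_left_mono)
    moreover have "\<bar>h t - h x\<bar> \<le> 2 * max B 0" using bound[OF that(1)] bound[OF that(2)] by linarith
    ultimately show ?thesis using e0 by linarith
  qed
  moreover have "C \<ge> 0" unfolding C_def by simp
  ultimately show thesis using that by blast
qed

lemma little_o_rho_tail_bound:
  fixes h :: "real \<Rightarrow> real"
  assumes lim: "((\<lambda>t. h t / rho t) \<longlongrightarrow> 0) at_top" and e0: "\<epsilon> > 0"
  obtains R where "R \<ge> 0" "\<And>t. t \<ge> R \<Longrightarrow> \<bar>h t\<bar> \<le> \<epsilon> * rho t"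
proof -
  obtain R where "\<And>t. t \<ge> R \<Longrightarrow> \<bar>h t / rho t\<bar> < \<epsilon>"
    using tendstoD[OF lim e0] by (auto simp: eventually_at_top_linorder)
  then have "\<bar>h t\<bar> \<le> \<epsilon> * rho t" if "t \<ge> max R 0" for t
    using that rho_pos[of t] by (fastforce simp: abs_divide field_simps)
  then show thesis using that[of "max R 0"] by simp
qed

lemma little_o_rho_quadratic_modulus:
  fixes h :: "real \<Rightarrow> real"
  assumes cont: "continuous_on {0..} h" and lim: "((\<lambda>t. h t / rho t) \<longlongrightarrow> 0) at_top"
    and e0: "\<epsilon> > 0"
  obtains C where "C \<ge> 0"
    "\<And>x t. x \<ge> 0 \<Longrightarrow> t \<ge> 0 \<Longrightarrow> \<bar>h t - h x\<bar> \<le> 3 * \<epsilon> * rho x + C * (t - x)^2"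
proof -
  obtain R where R0: "R \<ge> 0" and R: "\<And>t. t \<ge> R \<Longrightarrow> \<bar>h t\<bar> \<le> \<epsilon> * rho t"
    using little_o_rho_tail_bound[OF lim e0] by blast
  define K where "K = {0..R + 1}"
  have "compact K" "continuous_on K h"
    unfolding K_def using continuous_on_subset[OF cont] by auto
  then obtain B where B: "\<And>y. y \<in> K \<Longrightarrow> \<bar>h y\<bar> \<le> B"
    using compact_continuous_image compact_imp_bounded bounded_real by (metis image_eqI)
  obtain C0 where C0: "C0 \<ge> 0"
    and near: "\<And>x t. x \<in> K \<Longrightarrow> t \<in> K \<Longrightarrow> \<bar>h t - h x\<bar> \<le> \<epsilon> + C0 * (t - x)^2"
    using uniformly_continuous_on_quadratic_modulus[OF
        compact_uniformly_continuous[OF \<open>continuous_on K h\<close> \<open>compact K\<close>] B e0] by blast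
  define C where "C = C0 + max B 0 + 2 * \<epsilon>"
  have "\<bar>h t - h x\<bar> \<le> 3 * \<epsilon> * rho x + C * (t - x)^2" if x0: "x \<ge> 0" and t0: "t \<ge> 0" for x t
  proof -
    define s where "s = (t - x)^2"
    have e_rho: "\<epsilon> \<le> \<epsilon> * rho x" using e0 rho_ge_1[of x] by simp
    have tail_t: "\<epsilon> * rho t \<le> 2 * (\<epsilon> * rho x) + 2 * (\<epsilon> * s)"
      using mult_left_mono[OF rho_le_shift[of t x], of \<epsilon>] e0 unfolding s_def by (simp add: algebra_simps)
    have rest: "0 \<le> C0 * s" "0 \<le> max B 0 * s" "0 \<le> \<epsilon> * s" "0 \<le> \<epsilon> * rho x"
      using C0 e0 rho_pos[of x] unfolding s_def by simp_all
    have far: "max B 0 \<le> max B 0 * s" if "1 \<le> \<bar>t - x\<bar>"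
    proof -
      have "1 \<le> \<bar>t - x\<bar>^2" by (rule one_le_power[OF that])
      then show ?thesis unfolding s_def using mult_left_mono[of 1 "(t - x)^2" "max B 0"] by simp
    qed
    consider "x \<in> K" "t \<in> K" | "x \<ge> R" "t \<ge> R"
      | "x \<in> K" "t \<ge> R" "1 \<le> \<bar>t - x\<bar>" | "t \<in> K" "x \<ge> R" "1 \<le> \<bar>t - x\<bar>"
      using x0 t0 unfolding K_def by fastforce
    then have "\<bar>h t - h x\<bar> \<le> 3 * (\<epsilon> * rho x) + C0 * s + max B 0 * s + 2 * (\<epsilon> * s)"
    proof cases
      case 1
      then show ?thesis using near[OF 1] e_rho rest unfolding s_def by linarith
    next
      case 2
      then show ?thesis using R[of x] R[of t] tail_t rest by linarith
    next
      case 3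
      then show ?thesis using B[of x] R[of t] tail_t rest far by linarith
    next
      case 4
      then show ?thesis using B[of t] R[of x] rest far by linarith
    qed
    then show ?thesis unfolding C_def s_def by (simp add: algebra_simps)
  qed
  moreover have "C \<ge> 0" unfolding C_def using C0 e0 by simp
  ultimately show thesis using that by blast
qed

lemma T_op_centered_bound:
  fixes a \<alpha> \<beta> x e C :: real and h :: "real \<Rightarrow> real"
  assumes N0: "real n + \<beta> > 0" and al: "\<alpha> \<ge> 0" and a0: "a \<ge> 0" and x0: "x \<ge> 0"
    and cont: "continuous_on {0..} h"
    and modulus: "\<And>t. t \<ge> 0 \<Longrightarrow> \<bar>h t - h x\<bar> \<le> e + C * (t - x)^2"
  shows "summable (\<lambda>k. W_basis n k a x * integral (T_interval n \<alpha> \<beta> k) (\<lambda>t. h t - h x))"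
    and "\<bar>T_op n a \<alpha> \<beta> (\<lambda>t. h t - h x) x\<bar>
           \<le> e + C * ((T_moment2 n a \<alpha> \<beta> x - x^2) - 2 * (x * (T_moment1 n a \<alpha> \<beta> x - x)))"
proof -
  have centered_cont: "continuous_on {0..} (\<lambda>t. h t - h x)" by (intro continuous_intros cont)
  have "\<bar>h t - h x\<bar> \<le> (e + C * x^2) + (- 2 * C * x) * t + C * t^2" if "t \<ge> 0" for t
    using modulus[OF that] by (simp add: power2_eq_square algebra_simps)
  note T = T_op_abs_le_quadratic[OF N0 al a0 x0 centered_cont this]
  show "summable (\<lambda>k. W_basis n k a x * integral (T_interval n \<alpha> \<beta> k) (\<lambda>t. h t - h x))"
    by (rule T(1))
  show "\<bar>T_op n a \<alpha> \<beta> (\<lambda>t. h t - h x) x\<bar>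
           \<le> e + C * ((T_moment2 n a \<alpha> \<beta> x - x^2) - 2 * (x * (T_moment1 n a \<alpha> \<beta> x - x)))"
    using T(2) by (simp add: power2_eq_square algebra_simps)
qed

lemma T_op_minus_self_eq:
  fixes a \<alpha> \<beta> x L :: real and f h :: "real \<Rightarrow> real"
  assumes N0: "real n + \<beta> > 0" and al: "\<alpha> \<ge> 0" and a0: "a \<ge> 0" and x0: "x \<ge> 0"
    and ch: "continuous_on {0..} h" and f: "\<And>t. f t = h t + L * rho t"
    and summable: "summable (\<lambda>k. W_basis n k a x * integral (T_interval n \<alpha> \<beta> k) (\<lambda>t. h t - h x))"
  shows "T_op n a \<alpha> \<beta> f x - f x = T_op n a \<alpha> \<beta> (\<lambda>t. h t - h x) x + L * (T_moment2 n a \<alpha> \<beta> x - x^2)"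
proof -
  define q where "q = (\<lambda>t. (f x - L * x^2) + 0 * t + L * t^2)"
  have "continuous_on {0..} q" unfolding q_def by (intro continuous_intros)
  moreover have "summable (\<lambda>k. W_basis n k a x * integral (T_interval n \<alpha> \<beta> k) q)"
    using sums_summable[OF T_op_quadratic_sums[OF N0 a0 x0]] unfolding q_def .
  ultimately have "T_op n a \<alpha> \<beta> (\<lambda>t. (h t - h x) + q t) x
      = T_op n a \<alpha> \<beta> (\<lambda>t. h t - h x) x + T_op n a \<alpha> \<beta> q x"
    using T_op_add[OF N0 al _ _ summable] ch by (simp add: continuous_intros)
  moreover have "(\<lambda>t. (h t - h x) + q t) = f"
    unfolding q_def using f by (simp add: fun_eq_iff rho_def algebra_simps)
  moreover have "T_op n a \<alpha> \<beta> q x = f x + L * (T_moment2 n a \<alpha> \<beta> x - x^2)"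
    unfolding q_def T_op_quadratic[OF N0 a0 x0] by (simp add: algebra_simps)
  ultimately show ?thesis by simp
qed

lemma T_op_error_bound:
  fixes a \<alpha> \<beta> \<epsilon> :: real and f :: "real \<Rightarrow> real"
  assumes a0: "a \<ge> 0" and al: "0 \<le> \<alpha>" and ab: "\<alpha> \<le> \<beta>" and f: "f \<in> C_rho_k" and e0: "\<epsilon> > 0"
  obtains C where
    "\<And>n x. n \<ge> 1 \<Longrightarrow> x \<ge> 0 \<Longrightarrow> \<bar>T_op n a \<alpha> \<beta> f x - f x\<bar> \<le> (3 * \<epsilon> + C / real n) * rho x"
proof -
  from f obtain L where cf: "continuous_on {0..} f" and fl: "((\<lambda>x. f x / rho x) \<longlongrightarrow> L) at_top"
    unfolding C_rho_k_def C_rho_def by auto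
  define h where "h t = f t - L * rho t" for t
  have ch: "continuous_on {0..} h"
    unfolding h_def rho_def by (intro continuous_intros cf)
  have "((\<lambda>t. f t / rho t - L) \<longlongrightarrow> 0) at_top"
    using tendsto_diff[OF fl tendsto_const[of L]] by simp
  moreover have "f t / rho t - L = h t / rho t" for t
    unfolding h_def using rho_pos[of t] by (simp add: diff_divide_distrib)
  ultimately have hl: "((\<lambda>t. h t / rho t) \<longlongrightarrow> 0) at_top" by simp
  obtain C0 where C0: "C0 \<ge> 0"
    and modulus: "\<And>x t. x \<ge> 0 \<Longrightarrow> t \<ge> 0 \<Longrightarrow> \<bar>h t - h x\<bar> \<le> 3 * \<epsilon> * rho x + C0 * (t - x)^2"
    using little_o_rho_quadratic_modulus[OF ch hl e0] by blast
  obtain K where K1: "\<And>n x. n \<ge> 1 \<Longrightarrow> x \<ge> 0 \<Longrightarrow> \<bar>x * (T_moment1 n a \<alpha> \<beta> x - x)\<bar> \<le> K * rho x / real n"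
    and K2: "\<And>n x. n \<ge> 1 \<Longrightarrow> x \<ge> 0 \<Longrightarrow> \<bar>T_moment2 n a \<alpha> \<beta> x - x^2\<bar> \<le> K * rho x / real n"
    using T_moments_error[OF a0 al ab] by blast
  have "\<bar>T_op n a \<alpha> \<beta> f x - f x\<bar> \<le> (3 * \<epsilon> + (3 * C0 * K + \<bar>L\<bar> * K) / real n) * rho x"
    if n1: "n \<ge> 1" and x0: "x \<ge> 0" for n x
  proof -
    have N0: "real n + \<beta> > 0" using n1 al ab by simp
    define m1 where "m1 = T_moment1 n a \<alpha> \<beta> x"
    define m2 where "m2 = T_moment2 n a \<alpha> \<beta> x"
    note centered = T_op_centered_bound[OF N0 al a0 x0 ch modulus[OF x0], folded m1_def m2_def]
    have "T_op n a \<alpha> \<beta> f x - f x = T_op n a \<alpha> \<beta> (\<lambda>t. h t - h x) x + L * (m2 - x^2)"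
      unfolding m2_def using T_op_minus_self_eq[OF N0 al a0 x0 ch _ centered(1), of f L]
      by (simp add: h_def)
    then have "\<bar>T_op n a \<alpha> \<beta> f x - f x\<bar> \<le>
        \<bar>T_op n a \<alpha> \<beta> (\<lambda>t. h t - h x) x\<bar> + \<bar>L\<bar> * \<bar>m2 - x^2\<bar>"
      using abs_triangle_ineq[of "T_op n a \<alpha> \<beta> (\<lambda>t. h t - h x) x" "L * (m2 - x^2)"]
      by (simp only: abs_mult)
    also have "\<dots> \<le> 3 * \<epsilon> * rho x + C0 * (K * rho x / real n + 2 * (K * rho x / real n))
        + \<bar>L\<bar> * (K * rho x / real n)"
    proof (rule add_mono)
      have "(m2 - x^2) - 2 * (x * (m1 - x)) \<le> K * rho x / real n + 2 * (K * rho x / real n)"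
        using K1[OF n1 x0] K2[OF n1 x0] unfolding m1_def[symmetric] m2_def[symmetric] by linarith
      from mult_left_mono[OF this C0]
      show "\<bar>T_op n a \<alpha> \<beta> (\<lambda>t. h t - h x) x\<bar>
          \<le> 3 * \<epsilon> * rho x + C0 * (K * rho x / real n + 2 * (K * rho x / real n))"
        using centered(2) by linarith
      show "\<bar>L\<bar> * \<bar>m2 - x^2\<bar> \<le> \<bar>L\<bar> * (K * rho x / real n)"
        using K2[OF n1 x0] unfolding m2_def[symmetric] by (rule mult_left_mono) simp
    qed
    finally show ?thesis by (simp add: algebra_simps add_divide_distrib)
  qed
  then show thesis using that by blast
qed

lemma rho_norm_le:
  fixes g :: "real \<Rightarrow> real"
  assumes "\<And>x. x \<ge> 0 \<Longrightarrow> \<bar>g x\<bar> \<le> c * rho x"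
  shows "bdd_above ((\<lambda>x. \<bar>g x\<bar> / rho x) ` {0..})" and "0 \<le> rho_norm g" and "rho_norm g \<le> c"
proof -
  have le: "\<bar>g x\<bar> / rho x \<le> c" if "x \<in> {0..}" for x
    using assms[of x] that rho_pos[of x] by (simp add: divide_le_eq)
  then show bdd: "bdd_above ((\<lambda>x. \<bar>g x\<bar> / rho x) ` {0..})" by (rule bdd_aboveI2)
  show "0 \<le> rho_norm g"
    unfolding rho_norm_def using rho_pos[of 0] by (intro cSUP_upper2[OF bdd, of 0]) auto
  show "rho_norm g \<le> c"
    unfolding rho_norm_def using le by (intro cSUP_least) auto
qed

theorem theorem4p1:
  fixes a \<alpha> \<beta> :: real and f :: "real \<Rightarrow> real"
  assumes "a \<ge> 0" and "0 \<le> \<alpha>" and "\<alpha> \<le> \<beta>"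
    and "f \<in> C_rho_k"
  shows "(\<forall>\<^sub>F n in sequentially.
            bdd_above ((\<lambda>x. \<bar>T_op n a \<alpha> \<beta> f x - f x\<bar> / rho x) ` {0..}))
       \<and> (\<lambda>n. rho_norm (\<lambda>x. T_op n a \<alpha> \<beta> f x - f x)) \<longlonglongrightarrow> 0"
proof
  obtain C where C: "\<And>n x. n \<ge> 1 \<Longrightarrow> x \<ge> 0 \<Longrightarrow>
      \<bar>T_op n a \<alpha> \<beta> f x - f x\<bar> \<le> (3 * 1 + C / real n) * rho x"
    using T_op_error_bound[OF assms, of 1] by auto
  show "\<forall>\<^sub>F n in sequentially. bdd_above ((\<lambda>x. \<bar>T_op n a \<alpha> \<beta> f x - f x\<bar> / rho x) ` {0..})"
    using eventually_ge_at_top[of 1] by eventually_elim (rule rho_norm_le(1)[OF C])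
  show "(\<lambda>n. rho_norm (\<lambda>x. T_op n a \<alpha> \<beta> f x - f x)) \<longlonglongrightarrow> 0"
  proof (rule tendstoI)
    fix r :: real assume "r > 0"
    then obtain C where C: "\<And>n x. n \<ge> 1 \<Longrightarrow> x \<ge> 0 \<Longrightarrow>
        \<bar>T_op n a \<alpha> \<beta> f x - f x\<bar> \<le> (3 * (r / 6) + C / real n) * rho x"
      using T_op_error_bound[OF assms, of "r / 6"] by auto
    have "(\<lambda>n. \<bar>C\<bar> / real n) \<longlonglongrightarrow> 0"
      by (rule lim_const_over_n)
    from order_tendstoD(2)[OF this, of "r / 2"]
    have "\<forall>\<^sub>F n in sequentially. \<bar>C\<bar> / real n < r / 2"
      using \<open>r > 0\<close> by simp
    moreover have "\<forall>\<^sub>F n in sequentially. n \<ge> 1" by (rule eventually_ge_at_top)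
    ultimately show "\<forall>\<^sub>F n in sequentially. dist (rho_norm (\<lambda>x. T_op n a \<alpha> \<beta> f x - f x)) 0 < r"
    proof eventually_elim
      case (elim n)
      have "C / real n \<le> \<bar>C\<bar> / real n" by (simp add: divide_right_mono)
      then have "rho_norm (\<lambda>x. T_op n a \<alpha> \<beta> f x - f x) < r"
        using elim(1) rho_norm_le(3)[OF C[OF elim(2)]] by linarith
      then show ?case using rho_norm_le(2)[OF C[OF elim(2)]] by simp
    qed
  qed
qed

end
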